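(* For all constraint sets $C,\tilde C$ and substitutions $\sigma,\sigma_{\tilde c}$: if $C\to^{\sigma}\tilde C$ and $\sigma_{\tilde c}\vdash_{\min}\tilde C$, then $\sigma\oplus\sigma_{\tilde c}\vdash_{\min} C$.
   Context: There are two binding times $\mathsf{S}$, $\mathsf{D}$; $\mathcal{L}$ is a finite set of labels disjoint from them. A binding-time expression is a binding time or a label; a constraint is a formal pair $B_1\preceq B_2$; a constraint set is a finite set of constraints, with $\mathrm{labels}(C)=\{l\in\mathcal{L}:\exists B.\ l\preceq B\in C\text{ or }B\preceq l\in C\}$. Satisfaction $\vdash b_1\preceq b_2$ holds exactly for $\mathsf{S}\preceq\mathsf{D}$, $\mathsf{S}\preceq\mathsf{S}$, $\mathsf{D}\preceq\mathsf{D}$. A substitution is a finite partial map $\sigma:\mathcal{L}\rightharpoonup\{\mathsf{S},\mathsf{D}\}$, extended to binding-time expressions as the identity on binding times and on labels outside its domain; $\sigma(C)=\{\sigma(B_1)\preceq\sigma(B_2): B_1\preceq B_2\in C\}$. The extension $\sigma\oplus\hat\sigma$ has domain $\mathrm{dom}(\sigma)\cup\mathrm{dom}(\hat\sigma)$ and maps $l$ to $\sigma(l)$ if $l\in\mathrm{dom}(\sigma)$, else to $\hat\sigma(l)$. $\sigma\vdash C$ means: for every $B_1\preceq B_2\in C$, $\sigma(B_1),\sigma(B_2)$ are binding times and $\vdash\sigma(B_1)\preceq\sigma(B_2)$. $\sigma_c\vdash_{\min}C$ means: $\sigma_c\vdash C$, $\mathrm{dom}(\sigma_c)=\mathrm{labels}(C)$,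 and for every $\sigma\vdash C$ and $l\in\mathrm{labels}(C)$, $\vdash\sigma_c(l)\preceq\sigma(l)$. Write $[\,]$ for the empty substitution and $[l\mapsto b]$ for the substitution with domain $\{l\}$. The normalization relation $C\to^{\sigma}\tilde C$ holds if $C=C_0\uplus\{c\}$ and one of: (a) $c=\mathsf{S}\preceq\mathsf{S}$, $\sigma=[\,]$, $\tilde C=C_0$; (b) $c=\mathsf{S}\preceq\mathsf{D}$, $\sigma=[\,]$, $\tilde C=C_0$; (c) $c=\mathsf{D}\preceq\mathsf{D}$, $\sigma=[\,]$, $\tilde C=C_0$; (d) $c=l\preceq\mathsf{S}$ with $l\in\mathcal{L}$, $\sigma=[l\mapsto\mathsf{S}]$, $\tilde C=[l\mapsto\mathsf{S}](C_0)$; (e) $c=\mathsf{D}\preceq l$ with $l\in\mathcal{L}$, $\sigma=[l\mapsto\mathsf{D}]$, $\tilde C=[l\mapsto\mathsf{D}](C_0)$. *)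

theory Defs
  imports Main
begin

datatype bt = S | D

datatype 'l bte = BT bt | Lab 'l

type_synonym 'l constr = "'l bte \<times> 'l bte"   (* (B1, B2) stands for B1 \<preceq> B2 *)
type_synonym 'l cset = "'l constr set"
type_synonym 'l subst = "'l \<rightharpoonup> bt"

definition labels :: "'l cset \<Rightarrow> 'l set" where
  "labels C = {l. \<exists>B. (Lab l, B) \<in> C \<or> (B, Lab l) \<in> C}"

fun bt_le :: "bt \<Rightarrow> bt \<Rightarrow> bool" where
  "bt_le S D = True"
| "bt_le S S = True"
| "bt_le D D = True"
| "bt_le D S = False"

definition is_subst :: "'l subst \<Rightarrow> bool" where
  "is_subst \<sigma> \<longleftrightarrow> finite (dom \<sigma>)"

fun app_bte :: "'l subst \<Rightarrow> 'l bte \<Rightarrow> 'l bte" where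
  "app_bte \<sigma> (BT b) = BT b"
| "app_bte \<sigma> (Lab l) = (case \<sigma> l of Some b \<Rightarrow> BT b | None \<Rightarrow> Lab l)"

definition app_cset :: "'l subst \<Rightarrow> 'l cset \<Rightarrow> 'l cset" where
  "app_cset \<sigma> C = (\<lambda>(B1, B2). (app_bte \<sigma> B1, app_bte \<sigma> B2)) ` C"

definition ext :: "'l subst \<Rightarrow> 'l subst \<Rightarrow> 'l subst" where
  "ext \<sigma> \<sigma>' = (\<lambda>l. if l \<in> dom \<sigma> then \<sigma> l else \<sigma>' l)"

definition sat :: "'l subst \<Rightarrow> 'l cset \<Rightarrow> bool" where
  "sat \<sigma> C \<longleftrightarrow> (\<forall>(B1, B2) \<in> C. \<exists>b1 b2. app_bte \<sigma> B1 = BT b1 \<and> app_bte \<sigma> B2 = BT b2 \<and> bt_le b1 b2)"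

definition sat_min :: "'l subst \<Rightarrow> 'l cset \<Rightarrow> bool" where
  "sat_min \<sigma>c C \<longleftrightarrow> sat \<sigma>c C \<and> dom \<sigma>c = labels C \<and>
     (\<forall>\<sigma>. is_subst \<sigma> \<longrightarrow> sat \<sigma> C \<longrightarrow>
        (\<forall>l \<in> labels C. \<exists>b1 b2. \<sigma>c l = Some b1 \<and> \<sigma> l = Some b2 \<and> bt_le b1 b2))"

inductive norm_step :: "'l cset \<Rightarrow> 'l subst \<Rightarrow> 'l cset \<Rightarrow> bool" where
  SS: "(BT S, BT S) \<notin> C0 \<Longrightarrow> norm_step (insert (BT S, BT S) C0) Map.empty C0"
| SD: "(BT S, BT D) \<notin> C0 \<Longrightarrow> norm_step (insert (BT S, BT D) C0) Map.empty C0"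
| DD: "(BT D, BT D) \<notin> C0 \<Longrightarrow> norm_step (insert (BT D, BT D) C0) Map.empty C0"
| LS: "(Lab l, BT S) \<notin> C0 \<Longrightarrow>
       norm_step (insert (Lab l, BT S) C0) [l \<mapsto> S] (app_cset [l \<mapsto> S] C0)"
| DL: "(BT D, Lab l) \<notin> C0 \<Longrightarrow>
       norm_step (insert (BT D, Lab l) C0) [l \<mapsto> D] (app_cset [l \<mapsto> D] C0)"

end

theory Submission
  imports Defs
begin

text \<open>A step either removes a constraint that holds trivially, or removes a constraint that
  every satisfying substitution can only meet by mapping one label l to one binding time b.
  In the second case a satisfier of C is exactly a substitution mapping l to b that satisfies
  the rest of C with l fixed to b, so minimal solutions correspond by adding l \<mapsto> b.\<close>

lemma bt_le_refl: "bt_le b b"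
  by (cases b) auto

lemma app_bte_ext: "app_bte (ext \<sigma> \<tau>) B = app_bte \<tau> (app_bte \<sigma> B)"
  by (cases B) (auto simp: ext_def split: option.splits)

lemma ext_empty: "ext Map.empty \<tau> = \<tau>"
  unfolding ext_def by auto

lemma ext_upd_absorb: "\<sigma> l = Some b \<Longrightarrow> ext [l \<mapsto> b] \<sigma> = \<sigma>"
  unfolding ext_def by auto

lemma dom_ext: "dom (ext \<sigma> \<tau>) = dom \<sigma> \<union> dom \<tau>"
  unfolding ext_def dom_def by auto

lemma sat_app_cset: "sat \<sigma> (app_cset \<tau> C) \<longleftrightarrow> sat (ext \<tau> \<sigma>) C"
  unfolding sat_def app_cset_def by (auto simp: app_bte_ext)

(* Not usable as simp rules: {c} is itself an insert, so they would loop. *)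
lemma sat_insert: "sat \<sigma> (insert c C) \<longleftrightarrow> sat \<sigma> {c} \<and> sat \<sigma> C"
  unfolding sat_def by auto

lemma labels_insert: "labels (insert c C) = labels {c} \<union> labels C"
  unfolding labels_def by auto

lemma app_bte_upd_eq_Lab: "app_bte [l \<mapsto> b] B = Lab x \<longleftrightarrow> B = Lab x \<and> x \<noteq> l"
  by (cases B) auto

lemma labels_app_cset_upd: "labels (app_cset [l \<mapsto> b] C) = labels C - {l}"
proof
  show "labels (app_cset [l \<mapsto> b] C) \<subseteq> labels C - {l}"
    unfolding labels_def app_cset_def by (auto simp: app_bte_upd_eq_Lab eq_commute[of "Lab _"])
  show "labels C - {l} \<subseteq> labels (app_cset [l \<mapsto> b] C)"
  proof
    fix x assume "x \<in> labels C - {l}"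
    then obtain B where "x \<noteq> l" "(Lab x, B) \<in> C \<or> (B, Lab x) \<in> C"
      unfolding labels_def by auto
    then have "(Lab x, app_bte [l \<mapsto> b] B) \<in> app_cset [l \<mapsto> b] C \<or>
               (app_bte [l \<mapsto> b] B, Lab x) \<in> app_cset [l \<mapsto> b] C"
      unfolding app_cset_def by (force simp: image_iff)
    then show "x \<in> labels (app_cset [l \<mapsto> b] C)"
      unfolding labels_def by blast
  qed
qed

lemma sat_Lab_S: "sat \<sigma> {(Lab l, BT S)} \<longleftrightarrow> \<sigma> l = Some S"
proof -
  have "bt_le b S \<longleftrightarrow> b = S" for b by (cases b) auto
  then show ?thesis unfolding sat_def by (auto split: option.splits)
qed

lemma sat_D_Lab: "sat \<sigma> {(BT D, Lab l)} \<longleftrightarrow> \<sigma> l = Some D"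
proof -
  have "bt_le D b \<longleftrightarrow> b = D" for b by (cases b) auto
  then show ?thesis unfolding sat_def by (auto split: option.splits)
qed

lemma sat_min_insert_trivial:
  assumes "bt_le a b" and "sat_min \<tau> C"
  shows "sat_min \<tau> (insert (BT a, BT b) C)"
proof -
  have "sat \<sigma> (insert (BT a, BT b) C) \<longleftrightarrow> sat \<sigma> C" for \<sigma> :: "'a subst"
    using assms(1) unfolding sat_def by auto
  moreover have "labels (insert (BT a, BT b) C) = labels C"
    unfolding labels_def by auto
  ultimately show ?thesis
    using assms(2) unfolding sat_min_def by simp
qed

lemma sat_min_insert_forcing:
  assumes forces: "\<And>\<sigma>. sat \<sigma> {c} \<longleftrightarrow> \<sigma> l = Some b"
    and labels_c: "labels {c} = {l}"
    and min: "sat_min \<tau> (app_cset [l \<mapsto> b] C)"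
  shows "sat_min (ext [l \<mapsto> b] \<tau>) (insert c C)"
proof -
  have sat_iff: "sat \<sigma> (insert c C) \<longleftrightarrow> \<sigma> l = Some b \<and> sat \<sigma> C" for \<sigma>
    unfolding sat_insert[of \<sigma> c C] forces ..
  have labels_C: "labels (insert c C) = insert l (labels C)"
    unfolding labels_insert[of c C] labels_c by simp
  have dom_\<tau>: "dom \<tau> = labels C - {l}"
    using min by (simp add: sat_min_def labels_app_cset_upd)
  have "sat (ext [l \<mapsto> b] \<tau>) C"
    using min unfolding sat_min_def sat_app_cset by blast
  then have "sat (ext [l \<mapsto> b] \<tau>) (insert c C)"
    by (simp add: sat_iff ext_def)
  moreover have "dom (ext [l \<mapsto> b] \<tau>) = labels (insert c C)"
    using dom_\<tau> labels_C by (auto simp: dom_ext)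
  moreover have "\<exists>b1 b2. ext [l \<mapsto> b] \<tau> l' = Some b1 \<and> \<sigma> l' = Some b2 \<and> bt_le b1 b2"
    if "is_subst \<sigma>" and sat_\<sigma>: "sat \<sigma> (insert c C)" and l': "l' \<in> labels (insert c C)"
    for \<sigma> l'
  proof -
    have \<sigma>_l: "\<sigma> l = Some b"
      using sat_\<sigma> by (simp add: sat_iff)
    show ?thesis
    proof (cases "l' = l")
      case True
      then show ?thesis using \<sigma>_l by (simp add: ext_def bt_le_refl)
    next
      case False
      have "sat \<sigma> (app_cset [l \<mapsto> b] C)"
        using sat_\<sigma> unfolding sat_iff sat_app_cset ext_upd_absorb[of \<sigma> l b, OF \<sigma>_l] by blast
      moreover have "l' \<in> labels (app_cset [l \<mapsto> b] C)"
        using False l' labels_C by (simp add: labels_app_cset_upd)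
      ultimately show ?thesis
        using min \<open>is_subst \<sigma>\<close> False unfolding sat_min_def by (auto simp: ext_def)
    qed
  qed
  ultimately show ?thesis
    unfolding sat_min_def by blast
qed

theorem lemma10:
  fixes C Ct :: "'l cset" and \<sigma> \<sigma>ct :: "'l subst"
  assumes "finite C" and "finite Ct"
    and "is_subst \<sigma>" and "is_subst \<sigma>ct"
    and "norm_step C \<sigma> Ct"
    and "sat_min \<sigma>ct Ct"
  shows "sat_min (ext \<sigma> \<sigma>ct) C"
  using assms(5)
proof (cases rule: norm_step.cases)
  case SS then show ?thesis using assms(6) by (simp add: ext_empty sat_min_insert_trivial)
next
  case SD then show ?thesis using assms(6) by (simp add: ext_empty sat_min_insert_trivial)
next
  case DD then show ?thesis using assms(6) by (simp add: ext_empty sat_min_insert_trivial)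
next
  case (LS l C0)
  moreover have "labels {(Lab l, BT S)} = {l}" by (simp add: labels_def)
  ultimately show ?thesis using assms(6) by (simp add: sat_min_insert_forcing sat_Lab_S)
next
  case (DL l C0)
  moreover have "labels {(BT D, Lab l)} = {l}" by (simp add: labels_def)
  ultimately show ?thesis using assms(6) by (simp add: sat_min_insert_forcing sat_D_Lab)
qed

end
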